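(* Let $G$ be a group given by a presentation $\langle X\mid R\rangle$ in which every $x\in X$ satisfies $x^2=e$ and every relation in $R$ has even length. If $I=X$ or $I=\{x\}$ for some $x\in X$, then for every $w\in G$ the set $wG_I\cap G^I$ contains exactly one element. Consequently, the factorisation of each element of $G$ with respect to $G_I$ is unique: if $w=ab=a'b'$ with $a,a'\in G^I$ and $b,b'\in G_I$, then $a=a'$ and $b=b'$.
   Context: Every $w\in G$ can be written as a product $x_1^{a_1}\cdots x_r^{a_r}$ with $x_j\in X$, $a_j=\pm1$; the length $l(w)$ is the smallest such $r$. The length of a relation $u=v$ ($u,v$ in the free group $F(X)$) is the length of the word $uv^{-1}$ in $F(X)$. For $I\subseteq X$, $G_I$ is the subgroup of $G$ generated by $I$, and $G^I=\{w\in G: l(wy)>l(w)\ \text{for all } y\in I\}$. *)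

theory Defs
  imports "HOL-Algebra.Algebra"
begin

text \<open>Words in the free group F(S): lists of letters (x, b), where b = True means x^1
  and b = False means x^(-1).\<close>

type_synonym 'x word = "('x \<times> bool) list"

definition word_over :: "'x set \<Rightarrow> 'x word \<Rightarrow> bool" where
  "word_over S w \<longleftrightarrow> fst ` set w \<subseteq> S"

definition inv_word :: "'x word \<Rightarrow> 'x word" where
  "inv_word w = rev (map (\<lambda>(x, b). (x, \<not> b)) w)"

inductive cancel_step :: "'x word \<Rightarrow> 'x word \<Rightarrow> bool" where
  "cancel_step (u @ [(x, b), (x, \<not> b)] @ v) (u @ v)"

definition free_equiv :: "'x word \<Rightarrow> 'x word \<Rightarrow> bool" where
  "free_equiv = equivclp cancel_step"

definition free_length :: "'x word \<Rightarrow> nat" where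
  "free_length w = (LEAST n. \<exists>w'. free_equiv w w' \<and> length w' = n)"

text \<open>Length of the relation u = v: length of u v^(-1) in F(S).\<close>
definition rel_length :: "'x word \<times> 'x word \<Rightarrow> nat" where
  "rel_length r = free_length (fst r @ inv_word (snd r))"

inductive pres_step :: "('x word \<times> 'x word) set \<Rightarrow> 'x word \<Rightarrow> 'x word \<Rightarrow> bool"
  for R where
  cancel: "pres_step R (u @ [(x, b), (x, \<not> b)] @ v) (u @ v)"
| relator: "(r, s) \<in> R \<Longrightarrow> pres_step R (u @ r @ v) (u @ s @ v)"

definition pres_equiv :: "('x word \<times> 'x word) set \<Rightarrow> 'x word \<Rightarrow> 'x word \<Rightarrow> bool" where
  "pres_equiv R = equivclp (pres_step R)"

definition eval_word :: "('g, 'm) monoid_scheme \<Rightarrow> ('x \<Rightarrow> 'g) \<Rightarrow> 'x word \<Rightarrow> 'g" where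
  "eval_word G gen w =
     foldr (\<lambda>(x, b) acc. (if b then gen x else inv\<^bsub>G\<^esub> (gen x)) \<otimes>\<^bsub>G\<^esub> acc) w \<one>\<^bsub>G\<^esub>"

text \<open>G is given by the presentation \<langle>S | R\<rangle> via gen: the words over S evaluate onto G,
  and two words are equal in G iff they are equivalent modulo free cancellation and R.
  (I.e. the induced map F(S)/\<langle>\<langle>R\<rangle>\<rangle> \<rightarrow> G is an isomorphism.)\<close>
definition presents :: "('g, 'm) monoid_scheme \<Rightarrow> 'x set \<Rightarrow> ('x word \<times> 'x word) set
    \<Rightarrow> ('x \<Rightarrow> 'g) \<Rightarrow> bool" where
  "presents G S R gen \<longleftrightarrow>
     group G \<and> gen ` S \<subseteq> carrier G \<and>
     (\<forall>(u, v) \<in> R. word_over S u \<and> word_over S v) \<and>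
     carrier G = eval_word G gen ` {w. word_over S w} \<and>
     (\<forall>w1 w2. word_over S w1 \<longrightarrow> word_over S w2 \<longrightarrow>
        (eval_word G gen w1 = eval_word G gen w2 \<longleftrightarrow> pres_equiv R w1 w2))"

definition glength :: "('g, 'm) monoid_scheme \<Rightarrow> 'x set \<Rightarrow> ('x \<Rightarrow> 'g) \<Rightarrow> 'g \<Rightarrow> nat" where
  "glength G S gen g = (LEAST r. \<exists>w. word_over S w \<and> length w = r \<and> eval_word G gen w = g)"

definition par_sub :: "('g, 'm) monoid_scheme \<Rightarrow> ('x \<Rightarrow> 'g) \<Rightarrow> 'x set \<Rightarrow> 'g set" where
  "par_sub G gen I = generate G (gen ` I)"

definition min_reps :: "('g, 'm) monoid_scheme \<Rightarrow> 'x set \<Rightarrow> ('x \<Rightarrow> 'g) \<Rightarrow> 'x set \<Rightarrow> 'g set" where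
  "min_reps G S gen I = {w \<in> carrier G. \<forall>y \<in> I.
      glength G S gen (w \<otimes>\<^bsub>G\<^esub> gen y) > glength G S gen w}"

end

theory Submission
  imports Defs
begin

text \<open>Since every generator is an involution, every word of length \<open>n\<close> over \<open>S\<close> can be read
  with all exponents equal to \<open>+1\<close>. Free cancellation and the relations, all of even length,
  preserve the parity of the length of a word, so all words representing \<open>g\<close> have the same
  length parity; hence \<open>l(g s) \<noteq> l(g)\<close> for every generator \<open>s\<close>. For \<open>I = {x}\<close> the coset
  \<open>w G\<^sub>I = {w, w s}\<close> therefore contains exactly one element \<open>a\<close> with \<open>l(a s) > l(a)\<close>. For
  \<open>I = S\<close> the coset is all of \<open>G\<close>, and \<open>G\<^sup>S = {e}\<close> because deleting the last letter of a
  geodesic word shortens it. Unique factorisation follows from the uniqueness of the coset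
  representative, in any group.\<close>

lemma equivclp_invariant:
  assumes "\<And>x y. r x y \<Longrightarrow> f x = f y" and "equivclp r a b"
  shows "f a = f b"
  using assms(2) by (induction rule: equivclp_induct) (auto dest: assms(1))

lemma word_over_simps [simp]:
  "word_over S []"
  "word_over S ((x, b) # w) \<longleftrightarrow> x \<in> S \<and> word_over S w"
  "word_over S (u @ v) \<longleftrightarrow> word_over S u \<and> word_over S v"
  by (auto simp: word_over_def)

lemma even_free_length_iff: "even (free_length w) \<longleftrightarrow> even (length w)"
proof -
  have ex: "\<exists>n w'. free_equiv w w' \<and> length w' = n"
    by (intro exI[of _ "length w"] exI[of _ w]) (simp add: free_equiv_def)
  obtain w' where w': "free_equiv w w'" "length w' = free_length w"
    using LeastI_ex[OF ex] unfolding free_length_def by blast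
  have "even (length w) = even (length w')"
    using w'(1) unfolding free_equiv_def
    by (rule equivclp_invariant[rotated]) (auto elim: cancel_step.cases)
  with w'(2) show ?thesis by simp
qed

lemma even_rel_length_iff: "even (rel_length (u, v)) \<longleftrightarrow> even (length u + length v)"
  by (simp add: rel_length_def even_free_length_iff inv_word_def)

lemma (in group) unique_factorization_if_unique_coset_rep:
  assumes H: "subgroup H G" and M: "M \<subseteq> carrier G"
    and rep: "\<forall>w \<in> carrier G. \<exists>!a. a \<in> (w <# H) \<inter> M"
    and a: "a \<in> M" "a' \<in> M" and b: "b \<in> H" "b' \<in> H"
    and eq: "a \<otimes> b = a' \<otimes> b'"
  shows "a = a' \<and> b = b'"
proof -
  have carr: "a \<in> carrier G" "a' \<in> carrier G" "b \<in> carrier G" "b' \<in> carrier G"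
    using a b M subgroup.subset[OF H] by auto
  have "a' = a \<otimes> b \<otimes> inv b'"
    using eq carr by (simp add: inv_solve_right)
  also have "\<dots> = a \<otimes> (b \<otimes> inv b')"
    using carr by (simp add: m_assoc)
  finally have "a' \<in> a <# H"
    using b H unfolding l_coset_def by (blast intro: subgroup.m_closed subgroup.m_inv_closed)
  moreover have "a \<in> a <# H"
    using carr H unfolding l_coset_def by (metis UN_iff r_one singletonI subgroup.one_closed)
  ultimately have "a = a'"
    using rep carr a by blast
  with eq carr show ?thesis
    by simp
qed

locale involutive_even_presentation = group G for G (structure) +
  fixes S :: "'x set" and R :: "('x word \<times> 'x word) set" and gen :: "'x \<Rightarrow> 'a"
  assumes presents: "presents G S R gen"
    and gen_involution: "\<forall>x \<in> S. gen x \<otimes> gen x = \<one>"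
    and even_rel: "\<forall>r \<in> R. even (rel_length r)"
begin

abbreviation "ev \<equiv> eval_word G gen"
abbreviation "len \<equiv> glength G S gen"

lemma gen_closed: "x \<in> S \<Longrightarrow> gen x \<in> carrier G"
  using presents by (auto simp: presents_def)

lemma inv_gen: "x \<in> S \<Longrightarrow> inv (gen x) = gen x"
  using gen_involution gen_closed inv_equality by blast

lemma ev_Nil [simp]: "ev [] = \<one>"
  by (simp add: eval_word_def)

lemma ev_Cons [simp]: "x \<in> S \<Longrightarrow> ev ((x, b) # w) = gen x \<otimes> ev w"
  by (simp add: eval_word_def inv_gen)

lemma ev_closed: "word_over S w \<Longrightarrow> ev w \<in> carrier G"
  by (induction w) (auto simp: gen_closed)

lemma ev_append: "word_over S u \<Longrightarrow> word_over S v \<Longrightarrow> ev (u @ v) = ev u \<otimes> ev v"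
  by (induction u) (auto simp: gen_closed ev_closed m_assoc)

lemma pres_step_even_length_iff: "pres_step R u v \<Longrightarrow> even (length u) \<longleftrightarrow> even (length v)"
proof (induction rule: pres_step.induct)
  case (relator r s u v)
  then have "even (length r + length s)"
    using even_rel even_rel_length_iff by blast
  then show ?case by auto
qed simp

lemma even_length_iff_if_ev_eq:
  assumes "word_over S u" "word_over S v" "ev u = ev v"
  shows "even (length u) \<longleftrightarrow> even (length v)"
proof -
  have "pres_equiv R u v"
    using presents assms by (auto simp: presents_def)
  then show ?thesis
    unfolding pres_equiv_def by (rule equivclp_invariant[rotated]) (rule pres_step_even_length_iff)
qed

lemma geodesic_word_exists:
  assumes "g \<in> carrier G"
  obtains w where "word_over S w" "length w = len g" "ev w = g"
proof -
  have "\<exists>n w. word_over S w \<and> length w = n \<and> ev w = g"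
    using assms presents by (auto simp: presents_def)
  from LeastI_ex[OF this] show thesis
    using that unfolding glength_def by blast
qed

lemma len_ev_le: "word_over S w \<Longrightarrow> len (ev w) \<le> length w"
  unfolding glength_def by (rule Least_le) blast

lemma len_one [simp]: "len \<one> = 0"
  using len_ev_le[of "[]"] by simp

lemma even_len_ev_iff:
  assumes w: "word_over S w"
  shows "even (len (ev w)) \<longleftrightarrow> even (length w)"
proof -
  obtain w' where "word_over S w'" "length w' = len (ev w)" "ev w' = ev w"
    by (rule geodesic_word_exists[OF ev_closed[OF w]])
  with w show ?thesis
    using even_length_iff_if_ev_eq by metis
qed

lemma len_mult_gen_neq:
  assumes g: "g \<in> carrier G" and y: "y \<in> S"
  shows "len (g \<otimes> gen y) \<noteq> len g"
proof -
  obtain w where w: "word_over S w" "length w = len g" "ev w = g"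
    by (rule geodesic_word_exists[OF g])
  have "ev (w @ [(y, True)]) = g \<otimes> gen y"
    using w y by (simp add: ev_append gen_closed)
  then have "even (len (g \<otimes> gen y)) \<longleftrightarrow> odd (len g)"
    using even_len_ev_iff[of "w @ [(y, True)]"] w y by simp
  then show ?thesis by auto
qed

lemma len_mult_gen_less:
  assumes g: "g \<in> carrier G" "g \<noteq> \<one>"
  obtains y where "y \<in> S" "len (g \<otimes> gen y) < len g"
proof -
  obtain w where w: "word_over S w" "length w = len g" "ev w = g"
    by (rule geodesic_word_exists[OF g(1)])
  with g obtain p y b where p: "w = p @ [(y, b)]"
    by (metis ev_Nil rev_exhaust surj_pair)
  have y: "y \<in> S" "word_over S p"
    using w p by auto
  have "g = ev p \<otimes> gen y"
    using w p y by (simp add: ev_append gen_closed)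
  then have "g \<otimes> gen y = ev p \<otimes> (gen y \<otimes> gen y)"
    using y by (simp add: ev_closed gen_closed m_assoc)
  also have "\<dots> = ev p"
    using y gen_involution ev_closed by simp
  finally have "len (g \<otimes> gen y) \<le> length p"
    using len_ev_le y by simp
  with p w y that show thesis by simp
qed

lemma par_sub_all: "par_sub G gen S = carrier G"
proof
  show "par_sub G gen S \<subseteq> carrier G"
    unfolding par_sub_def by (rule generate_incl) (auto simp: gen_closed)
  have "ev w \<in> generate G (gen ` S)" if "word_over S w" for w
    using that
  proof (induction w)
    case (Cons a w)
    then show ?case
      by (cases a) (simp add: generate.eng generate.incl)
  qed (simp add: generate.one)
  then show "carrier G \<subseteq> par_sub G gen S"
    using presents unfolding par_sub_def presents_def by auto
qed

lemma par_sub_singleton: "x \<in> S \<Longrightarrow> par_sub G gen {x} = {\<one>, gen x}"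
proof
  assume x: "x \<in> S"
  show "par_sub G gen {x} \<subseteq> {\<one>, gen x}"
  proof
    fix h assume "h \<in> par_sub G gen {x}"
    then show "h \<in> {\<one>, gen x}"
      unfolding par_sub_def
      by (induction rule: generate.induct) (use x gen_involution gen_closed inv_gen in auto)
  qed
  show "{\<one>, gen x} \<subseteq> par_sub G gen {x}"
    by (auto simp: par_sub_def intro: generate.intros)
qed

lemma min_reps_all: "min_reps G S gen S = {\<one>}"
proof (intro equalityI subsetI)
  fix g assume "g \<in> min_reps G S gen S"
  then have g: "g \<in> carrier G" "\<forall>y \<in> S. len g < len (g \<otimes> gen y)"
    by (auto simp: min_reps_def)
  show "g \<in> {\<one>}"
  proof (rule ccontr)
    assume "g \<notin> {\<one>}"
    then obtain y where "y \<in> S" "len (g \<otimes> gen y) < len g"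
      using len_mult_gen_less g(1) by blast
    with g(2) show False by fastforce
  qed
next
  fix g assume g: "g \<in> {\<one>}"
  have "0 < len (gen y)" if "y \<in> S" for y
    using len_mult_gen_neq[of \<one> y] that gen_closed by simp
  with g show "g \<in> min_reps G S gen S"
    using gen_closed by (auto simp: min_reps_def)
qed

lemma unique_min_rep_all:
  assumes w: "w \<in> carrier G"
  shows "\<exists>!a. a \<in> (w <# par_sub G gen S) \<inter> min_reps G S gen S"
proof -
  have "\<one> \<in> w <# carrier G"
    using w unfolding l_coset_def by (metis UN_iff inv_closed r_inv singletonI)
  then show ?thesis
    by (simp add: par_sub_all min_reps_all)
qed

lemma unique_min_rep_singleton:
  assumes x: "x \<in> S" and w: "w \<in> carrier G"
  shows "\<exists>!a. a \<in> (w <# par_sub G gen {x}) \<inter> min_reps G S gen {x}"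
proof -
  define s where "s = gen x"
  have s: "s \<in> carrier G" "w \<otimes> s \<otimes> s = w"
    using x w gen_closed gen_involution by (auto simp: s_def m_assoc)
  have coset: "w <# par_sub G gen {x} = {w, w \<otimes> s}"
    using x w by (auto simp: par_sub_singleton l_coset_def s_def)
  have reps: "min_reps G S gen {x} = {a \<in> carrier G. len a < len (a \<otimes> s)}"
    by (simp add: min_reps_def s_def)
  consider "len w < len (w \<otimes> s)" | "len (w \<otimes> s) < len w"
    using len_mult_gen_neq w x unfolding s_def by fastforce
  then show ?thesis
  proof cases
    case 1
    then show ?thesis
      unfolding coset reps by (intro ex1I[of _ w]) (use w s in auto)
  next
    case 2
    then show ?thesis
      unfolding coset reps by (intro ex1I[of _ "w \<otimes> s"]) (use w s in auto)
  qed
qed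

end

theorem lemma3p10:
  fixes G :: "('g, 'm) monoid_scheme" and S :: "'x set"
    and R :: "('x word \<times> 'x word) set" and gen :: "'x \<Rightarrow> 'g" and I :: "'x set"
  assumes pres: "presents G S R gen"
    and invol: "\<forall>x \<in> S. gen x \<otimes>\<^bsub>G\<^esub> gen x = \<one>\<^bsub>G\<^esub>"
    and even_rel: "\<forall>r \<in> R. even (rel_length r)"
    and I: "I = S \<or> (\<exists>x \<in> S. I = {x})"
  shows "(\<forall>w \<in> carrier G. \<exists>!a. a \<in> (w <#\<^bsub>G\<^esub> par_sub G gen I) \<inter> min_reps G S gen I)
       \<and> (\<forall>a a' b b'. a \<in> min_reps G S gen I \<longrightarrow> a' \<in> min_reps G S gen I \<longrightarrow>
            b \<in> par_sub G gen I \<longrightarrow> b' \<in> par_sub G gen I \<longrightarrow>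
            a \<otimes>\<^bsub>G\<^esub> b = a' \<otimes>\<^bsub>G\<^esub> b' \<longrightarrow> a = a' \<and> b = b')"
proof -
  have "group G"
    using pres by (simp add: presents_def)
  with pres invol even_rel interpret involutive_even_presentation G S R gen
    by (simp add: involutive_even_presentation_def involutive_even_presentation_axioms_def)
  have rep: "\<forall>w \<in> carrier G. \<exists>!a. a \<in> (w <#\<^bsub>G\<^esub> par_sub G gen I) \<inter> min_reps G S gen I"
    using I unique_min_rep_all unique_min_rep_singleton by blast
  have "I \<subseteq> S"
    using I by blast
  then have "subgroup (par_sub G gen I) G"
    unfolding par_sub_def by (intro generate_is_subgroup) (auto simp: gen_closed)
  moreover have "min_reps G S gen I \<subseteq> carrier G"
    by (auto simp: min_reps_def)
  ultimately show ?thesis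
    using rep unique_factorization_if_unique_coset_rep by blast
qed

end
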